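(* Let $0<\beta\le\bar\alpha$ be constants. Let $H$ be a fixed random variable with zero mean, unit variance and a density, and for $\mu\in\mathbb{R}$, $\sigma>0$ let $Z=\mu+\sigma H$ (so $Z$ has mean $\mu$ and variance $\sigma^2$), with density $f_Z$ and c.d.f. $F_Z$. Define the value of renewable energy $$\text{VoR}(\mu,\sigma)=\bar\alpha\int_{-\infty}^{F_Z^{-1}(\beta/\bar\alpha)} z\,f_Z(z)\,dz,$$ where $F_Z^{-1}(a)=\inf\{z:F_Z(z)=a\}$. Then $\text{VoR}$ is increasing in $\mu$ and non-increasing in $\sigma$. Consequently, since $Z(t)=X(t)-w(t)$ with $w(t)$ zero-mean and independent of the renewable energy $X(t)$, the value of renewable energy is increasing with the mean of $X(t)$ and non-increasing with the variance of $X(t)$ (when the distribution of $Z(t)$ varies in such a location–scale family).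
   Context: In the model, $X(t)$ is the renewable power available in slot $t$, $w(t)=\sum_n w_n(t)$ is the aggregate zero-mean random deviation of user loads (independent of $X(t)$), $Z(t)=X(t)-w(t)$ is the effective renewable energy, $\beta$ is the day-ahead power price and $\bar\alpha$ the expected real-time power price. $\text{VoR}$ is the reduction of the minimal expected procurement cost relative to $\beta L^{\mathsf{d}}$ (the cost without renewables) when the optimal base power is positive. *)

theory Defs
  imports "HOL-Probability.Probability"
begin

definition cdf_of :: "'a measure \<Rightarrow> ('a \<Rightarrow> real) \<Rightarrow> real \<Rightarrow> real" where
  "cdf_of M Z z = measure M {\<omega> \<in> space M. Z \<omega> \<le> z}"

text \<open>Generalised inverse F^{-1}(a) = inf {z. F z = a}, taken in the extended
  reals so that the infimum of the empty set is +infinity.\<close>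
definition inv_cdf :: "(real \<Rightarrow> real) \<Rightarrow> real \<Rightarrow> ereal" where
  "inv_cdf F a = Inf {ereal z | z. F z = a}"

definition VoR :: "real \<Rightarrow> real \<Rightarrow> 'a measure \<Rightarrow> ('a \<Rightarrow> real) \<Rightarrow> (real \<Rightarrow> ennreal) \<Rightarrow> real" where
  "VoR alpha_bar beta M Z f =
     alpha_bar * (LINT z : {z. ereal z \<le> inv_cdf (cdf_of M Z) (beta / alpha_bar)} | lborel.
                    z * enn2real (f z))"

end

theory Submission
  imports Defs
begin

text \<open>The set \<open>{z. z \<le> F\<^sub>Z\<^sup>-\<^sup>1(a)}\<close> is the affine image of
  \<open>L = {h. h \<le> F\<^sub>H\<^sup>-\<^sup>1(a)}\<close>, so with \<open>B = {H \<in> L}\<close>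
  \<open>VoR(\<mu>, \<sigma>) = \<alpha> (\<mu> P(B) + \<sigma> E[1\<^sub>B H])\<close>, where \<open>B\<close> does not depend on \<open>\<mu>, \<sigma>\<close>.
  Either \<open>L\<close> is all of \<open>\<real>\<close> (the level \<open>a\<close> is never attained) or \<open>L = (-\<infinity>, t]\<close> with
  \<open>F\<^sub>H(t) \<ge> a > 0\<close> by right continuity; in both cases \<open>P(B) > 0\<close>, and \<open>E[1\<^sub>B H] \<le> 0\<close>
  because \<open>H\<close> has mean zero and \<open>B\<close> is a lower set of \<open>H\<close>. Hence VoR is strictly
  increasing in \<open>\<mu>\<close> and non-increasing in \<open>\<sigma>\<close>.\<close>

lemma ereal_le_inv_cdf_iff: "ereal z \<le> inv_cdf F a \<longleftrightarrow> (\<forall>h. F h = a \<longrightarrow> z \<le> h)"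
  unfolding inv_cdf_def by (auto simp: le_Inf_iff)

lemma ereal_le_inv_cdf_affine_iff:
  fixes \<sigma> :: real
  assumes "0 < \<sigma>"
  shows "ereal z \<le> inv_cdf (\<lambda>w. F ((w - \<mu>) / \<sigma>)) a \<longleftrightarrow> ereal ((z - \<mu>) / \<sigma>) \<le> inv_cdf F a"
proof -
  have "(\<forall>w. F ((w - \<mu>) / \<sigma>) = a \<longrightarrow> z \<le> w) \<longleftrightarrow> (\<forall>h. F h = a \<longrightarrow> (z - \<mu>) / \<sigma> \<le> h)"
  proof
    assume "\<forall>w. F ((w - \<mu>) / \<sigma>) = a \<longrightarrow> z \<le> w"
    then have "\<forall>h. F h = a \<longrightarrow> z \<le> \<mu> + \<sigma> * h"
      using assms by (metis add_diff_cancel_left' nonzero_mult_div_cancel_left order_less_irrefl)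
    then show "\<forall>h. F h = a \<longrightarrow> (z - \<mu>) / \<sigma> \<le> h"
      using assms by (simp add: pos_divide_le_eq algebra_simps)
  qed (use assms in \<open>auto simp: divide_le_cancel\<close>)
  then show ?thesis by (simp add: ereal_le_inv_cdf_iff)
qed

lemma cdf_of_affine:
  fixes \<sigma> :: real
  assumes "0 < \<sigma>"
  shows "cdf_of M (\<lambda>\<omega>. \<mu> + \<sigma> * H \<omega>) z = cdf_of M H ((z - \<mu>) / \<sigma>)"
proof -
  have "\<And>x. \<mu> + \<sigma> * x \<le> z \<longleftrightarrow> x \<le> (z - \<mu>) / \<sigma>"
    using assms by (auto simp: pos_le_divide_eq algebra_simps)
  then show ?thesis unfolding cdf_of_def by simp
qed

lemma (in prob_space) cdf_of_eq_cdf_distr: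
  assumes "H \<in> borel_measurable M"
  shows "cdf_of M H x = cdf (distr M borel H) x"
  using assms unfolding cdf_def cdf_of_def
  by (subst measure_distr) (auto simp: vimage_def Int_def conj_commute)

lemma (in prob_space) below_inv_cdf_cases:
  assumes H: "H \<in> borel_measurable M" and a: "0 < a"
  defines "L \<equiv> {h. ereal h \<le> inv_cdf (cdf_of M H) a}"
  shows "L = UNIV \<or> (\<exists>t. L = {..t} \<and> a \<le> cdf_of M H t)"
proof (cases "\<exists>h. cdf_of M H h = a")
  case False
  then show ?thesis unfolding L_def by (auto simp: ereal_le_inv_cdf_iff)
next
  case True
  let ?F = "cdf_of M H" and ?X = "{h. cdf_of M H h = a}"
  interpret D: real_distribution "distr M borel H" using H by simp
  have "eventually (\<lambda>x. ?F x < a) at_bot"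
    using D.cdf_lim_at_bot a unfolding cdf_of_eq_cdf_distr[OF H] by (rule order_tendstoD)
  then obtain l where l: "\<And>x. x \<le> l \<Longrightarrow> ?F x < a"
    unfolding eventually_at_bot_linorder by blast
  have bdd: "bdd_below ?X"
  proof (rule bdd_belowI)
    fix x assume "x \<in> ?X"
    then show "l \<le> x" using l[of x] by (cases "x \<le> l") auto
  qed
  have ne: "?X \<noteq> {}" using True by auto
  define t where "t = Inf ?X"
  have L: "L = {..t}"
    unfolding L_def t_def ereal_le_inv_cdf_iff using le_cInf_iff[OF ne bdd] by auto
  have "eventually (\<lambda>x. a \<le> ?F x) (at_right t)"
    unfolding eventually_at_right_field
  proof (intro exI[of _ "t + 1"] conjI allI impI)
    fix x assume "t < x"
    then obtain h where "?F h = a" "h < x" using cInf_lessD[OF ne] unfolding t_def by blast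
    then show "a \<le> ?F x"
      using D.cdf_nondecreasing[of h x] by (simp add: cdf_of_eq_cdf_distr[OF H])
  qed simp
  moreover have "(?F \<longlongrightarrow> ?F t) (at_right t)"
    using D.cdf_is_right_cont[of t] unfolding continuous_within cdf_of_eq_cdf_distr[OF H] .
  ultimately have "a \<le> ?F t"
    by (intro tendsto_lowerbound[where F="at_right t"]) auto
  with L show ?thesis by blast
qed

lemma (in prob_space) integral_indicator_lower_set_nonpos:
  fixes H :: "'a \<Rightarrow> real" and t :: real
  assumes I: "integrable M H" and E: "expectation H = 0"
  defines "B \<equiv> {\<omega> \<in> space M. H \<omega> \<le> t}"
  shows "(\<integral>\<omega>. indicator B \<omega> * H \<omega> \<partial>M) \<le> 0"
proof (cases "t \<le> 0")
  case True
  have "0 \<le> (\<integral>\<omega>. - (indicator B \<omega> * H \<omega>) \<partial>M)"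
    using True by (intro Bochner_Integration.integral_nonneg) (auto simp: B_def indicator_def)
  then show ?thesis by simp
next
  case False
  have Bev: "B \<in> events" unfolding B_def using borel_measurable_integrable[OF I] by measurable
  have "expectation H = (\<integral>\<omega>. indicator B \<omega> * H \<omega> + indicator (space M - B) \<omega> * H \<omega> \<partial>M)"
    by (intro Bochner_Integration.integral_cong) (auto simp: indicator_def)
  also have "\<dots> = (\<integral>\<omega>. indicator B \<omega> * H \<omega> \<partial>M) + (\<integral>\<omega>. indicator (space M - B) \<omega> * H \<omega> \<partial>M)"
    using I Bev by (simp add: integrable_real_mult_indicator mult.commute)
  finally have "(\<integral>\<omega>. indicator B \<omega> * H \<omega> \<partial>M) = - (\<integral>\<omega>. indicator (space M - B) \<omega> * H \<omega> \<partial>M)"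
    using E by simp
  moreover have "0 \<le> (\<integral>\<omega>. indicator (space M - B) \<omega> * H \<omega> \<partial>M)"
    using False by (intro Bochner_Integration.integral_nonneg) (auto simp: B_def indicator_def)
  ultimately show ?thesis by simp
qed

lemma (in prob_space) set_integral_density_eq_expectation:
  assumes D: "distributed M lborel Z f" and S: "S \<in> sets borel"
  shows "(LINT z:S|lborel. z * enn2real (f z)) = (\<integral>\<omega>. indicator S (Z \<omega>) * Z \<omega> \<partial>M)"
proof -
  have [measurable]: "f \<in> borel_measurable lborel" using distributed_borel_measurable[OF D] .
  interpret P: prob_space "density lborel f"
    using prob_space_distr[OF distributed_measurable[OF D]] distributed_distr_eq_density[OF D] by simp
  have "(\<integral>\<^sup>+z. f z \<partial>lborel) = 1"
    using P.emeasure_space_1 by (simp add: emeasure_density)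
  then have "AE z in lborel. f z \<noteq> \<infinity>" by (intro nn_integral_PInf_AE) auto
  then have "AE z in lborel. f z = ennreal (enn2real (f z))"
    by eventually_elim (simp add: ennreal_enn2real_if)
  then have D': "distributed M lborel Z (\<lambda>z. ennreal (enn2real (f z)))"
    using D by (subst distributed_cong_density[symmetric]) auto
  have "(LINT z:S|lborel. z * enn2real (f z)) = (\<integral>z. enn2real (f z) * (indicator S z * z) \<partial>lborel)"
    unfolding set_lebesgue_integral_def
    by (intro Bochner_Integration.integral_cong) (auto simp: indicator_def)
  also have "\<dots> = (\<integral>\<omega>. indicator S (Z \<omega>) * Z \<omega> \<partial>M)"
    using S by (intro distributed_integral[OF D']) auto
  finally show ?thesis .
qed

lemma (in prob_space) VoR_location_scale:
  fixes H :: "'a \<Rightarrow> real"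
  assumes I: "integrable M H" and \<sigma>: "0 < \<sigma>"
    and D: "distributed M lborel (\<lambda>\<omega>. \<mu> + \<sigma> * H \<omega>) f"
    and L: "L = {h. ereal h \<le> inv_cdf (cdf_of M H) (beta / alpha_bar)}" "L \<in> sets borel"
  defines "B \<equiv> {\<omega> \<in> space M. H \<omega> \<in> L}"
  shows "VoR alpha_bar beta M (\<lambda>\<omega>. \<mu> + \<sigma> * H \<omega>) f
    = alpha_bar * (\<mu> * prob B + \<sigma> * (\<integral>\<omega>. indicator B \<omega> * H \<omega> \<partial>M))"
proof -
  define S where "S = {z. ereal z \<le> inv_cdf (cdf_of M (\<lambda>\<omega>. \<mu> + \<sigma> * H \<omega>)) (beta / alpha_bar)}"
  have S_eq: "S = (\<lambda>z. (z - \<mu>) / \<sigma>) -` L"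
    unfolding S_def L cdf_of_affine[OF \<sigma>] ereal_le_inv_cdf_affine_iff[OF \<sigma>] by auto
  have "(\<lambda>z. (z - \<mu>) / \<sigma>) -` L \<inter> space borel \<in> sets borel" using L(2) by measurable
  then have "S \<in> sets borel" unfolding S_eq by simp
  have Bev: "B \<in> events" unfolding B_def using borel_measurable_integrable[OF I] L(2) by measurable
  have "(LINT z:S|lborel. z * enn2real (f z)) = (\<integral>\<omega>. indicator S (\<mu> + \<sigma> * H \<omega>) * (\<mu> + \<sigma> * H \<omega>) \<partial>M)"
    by (rule set_integral_density_eq_expectation[OF D \<open>S \<in> sets borel\<close>])
  also have "\<dots> = (\<integral>\<omega>. \<mu> * indicator B \<omega> + \<sigma> * (indicator B \<omega> * H \<omega>) \<partial>M)"
    using \<sigma> by (intro Bochner_Integration.integral_cong) (auto simp: S_eq B_def indicator_def algebra_simps)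
  also have "\<dots> = \<mu> * prob B + \<sigma> * (\<integral>\<omega>. indicator B \<omega> * H \<omega> \<partial>M)"
  proof -
    have "integrable M (\<lambda>\<omega>. indicator B \<omega> * H \<omega>)"
      using I Bev by (simp add: integrable_real_mult_indicator mult.commute)
    moreover have "integrable M (\<lambda>\<omega>. indicator B \<omega> :: real)"
      using Bev by (intro integrable_real_indicator) (auto simp: emeasure_eq_measure)
    ultimately show ?thesis using Bev by simp
  qed
  finally show ?thesis unfolding VoR_def S_def by simp
qed

theorem lemma2:
  fixes M :: "'a measure" and H :: "'a \<Rightarrow> real" and g :: "real \<Rightarrow> ennreal"
    and beta alpha_bar :: real
  assumes "prob_space M"
    and "0 < beta" and "beta \<le> alpha_bar"
    and "distributed M lborel H g"
    and "integrable M H"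
    and "prob_space.expectation M H = 0"
    and "prob_space.variance M H = 1"
  shows "(\<forall>\<mu> \<mu>' \<sigma> f f'. 0 < \<sigma> \<and> \<mu> < \<mu>'
            \<and> distributed M lborel (\<lambda>\<omega>. \<mu> + \<sigma> * H \<omega>) f
            \<and> distributed M lborel (\<lambda>\<omega>. \<mu>' + \<sigma> * H \<omega>) f'
            \<longrightarrow> VoR alpha_bar beta M (\<lambda>\<omega>. \<mu> + \<sigma> * H \<omega>) f
                < VoR alpha_bar beta M (\<lambda>\<omega>. \<mu>' + \<sigma> * H \<omega>) f')
       \<and> (\<forall>\<mu> \<sigma> \<sigma>' f f'. 0 < \<sigma> \<and> \<sigma> \<le> \<sigma>'
            \<and> distributed M lborel (\<lambda>\<omega>. \<mu> + \<sigma> * H \<omega>) f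
            \<and> distributed M lborel (\<lambda>\<omega>. \<mu> + \<sigma>' * H \<omega>) f'
            \<longrightarrow> VoR alpha_bar beta M (\<lambda>\<omega>. \<mu> + \<sigma>' * H \<omega>) f'
                \<le> VoR alpha_bar beta M (\<lambda>\<omega>. \<mu> + \<sigma> * H \<omega>) f)"
proof -
  interpret prob_space M by fact
  have Hm: "H \<in> borel_measurable M" using assms(5) by (rule borel_measurable_integrable)
  have \<alpha>: "0 < alpha_bar" and a: "0 < beta / alpha_bar" using assms(2,3) by auto
  define L where "L = {h. ereal h \<le> inv_cdf (cdf_of M H) (beta / alpha_bar)}"
  define B where "B = {\<omega> \<in> space M. H \<omega> \<in> L}"
  define e where "e = (\<integral>\<omega>. indicator B \<omega> * H \<omega> \<partial>M)"
  have "L \<in> sets borel \<and> 0 < prob B \<and> e \<le> 0"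
    using below_inv_cdf_cases[OF Hm a, folded L_def]
  proof (elim disjE exE conjE)
    assume "L = UNIV"
    moreover have "(\<integral>\<omega>. indicator (space M) \<omega> * H \<omega> \<partial>M) = expectation H"
      by (intro Bochner_Integration.integral_cong) auto
    ultimately show ?thesis using assms(6) by (simp add: B_def e_def prob_space)
  next
    fix t assume "L = {..t}" "beta / alpha_bar \<le> cdf_of M H t"
    then show ?thesis
      using a integral_indicator_lower_set_nonpos[OF assms(5,6), of t]
      by (simp add: B_def e_def cdf_of_def)
  qed
  then have V: "\<And>\<mu> \<sigma> f. 0 < \<sigma> \<Longrightarrow> distributed M lborel (\<lambda>\<omega>. \<mu> + \<sigma> * H \<omega>) f \<Longrightarrow>
      VoR alpha_bar beta M (\<lambda>\<omega>. \<mu> + \<sigma> * H \<omega>) f = alpha_bar * (\<mu> * prob B + \<sigma> * e)"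
    and p: "0 < prob B" and e: "e \<le> 0"
    using VoR_location_scale[OF assms(5) _ _ L_def] unfolding B_def e_def by auto
  show ?thesis
    using V p e \<alpha> by (auto intro!: mult_strict_left_mono mult_left_mono mult_right_mono_neg)
qed

end
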